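(* Let $p$ be a prime and $n$ a positive integer, written $n=p^kn'$ with $k=v_p(n)$. Then: (1) $P(p,n)=p^kP(p,n')$, where in the case $p=2$ it is assumed that $n'\neq1$. (2) If $p>2$ is not a Wieferich prime, then $P(p^2,n)=p^kP(p^2,n')$. (3) If $p>2$ is not a Wieferich prime, then $P(p^3,n)=p^kP(p^3,n')$.
   Context: $v_p(n)$ is the exponent of $p$ in $n$. For positive integers $m,n$, let $\mathbf{Z}_m$ be the integers modulo $m$ and $T:\mathbf{Z}_m^n\to\mathbf{Z}_m^n$, $T(a_0,\dots,a_{n-1})=(a_0+a_1,a_1+a_2,\dots,a_{n-1}+a_0)$. For $\mathbf{a}\in\mathbf{Z}_m^n$ the cycle length of $(T^k\mathbf{a})_{k\ge0}$ is the smallest positive integer $P$ such that there is $N$ with $T^{k+P}\mathbf{a}=T^k\mathbf{a}$ for all $k\ge N$. $P(m,n)$ denotes the maximum of these cycle lengths over all $\mathbf{a}\in\mathbf{Z}_m^n$. A prime $p$ is a Wieferich prime if $2^{p-1}\equiv1\pmod{p^2}$. *)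

theory Defs
  imports "HOL-Number_Theory.Number_Theory"
begin

text \<open>Elements of (Z_m)^n are represented as functions a :: nat => nat with
  a i < m for i < n and a i = 0 for i >= n (entries are residues 0..m-1).\<close>

definition vecs :: "nat \<Rightarrow> nat \<Rightarrow> (nat \<Rightarrow> nat) set" where
  "vecs m n = {a. (\<forall>i<n. a i < m) \<and> (\<forall>i\<ge>n. a i = 0)}"

definition Tmap :: "nat \<Rightarrow> nat \<Rightarrow> (nat \<Rightarrow> nat) \<Rightarrow> (nat \<Rightarrow> nat)" where
  "Tmap m n a = (\<lambda>i. if i < n then (a i + a ((i + 1) mod n)) mod m else 0)"

definition cycle_len :: "nat \<Rightarrow> nat \<Rightarrow> (nat \<Rightarrow> nat) \<Rightarrow> nat" where
  "cycle_len m n a =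
     (LEAST P. 0 < P \<and> (\<exists>N. \<forall>k\<ge>N. (Tmap m n ^^ (k + P)) a = (Tmap m n ^^ k) a))"

definition Pmax :: "nat \<Rightarrow> nat \<Rightarrow> nat" where
  "Pmax m n = Max (cycle_len m n ` vecs m n)"

definition wieferich :: "nat \<Rightarrow> bool" where
  "wieferich p \<longleftrightarrow> prime p \<and> [2 ^ (p - 1) = 1] (mod p\<^sup>2)"

end

(*
  Identify (Z_m)^n with Z_m[x]/(x^n - 1) by sending a to the sum of the a_i x^(-i). Then T is
  multiplication by 1 + x, and P(m,n) is the least P > 0 such that (1+x)^K ((1+x)^P - 1) lies
  in the ideal (m, x^n - 1) of Z[x] for some K: the cycle length of (1,0,...,0).

  Modulo p the Frobenius congruence (1+x)^p = 1 + x^p, combined with the substitution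
  x -> x^p, shows that P is a period for n iff pP is one for pn. Hence P(p,pn) = p P(p,n)
  as soon as p divides P(p,pn), and this holds because p divides P(p,p) for odd p and
  P(2,2n') is even for odd n' > 1; induction on k gives (1).

  For the modulus p^e, periods lift: P(p^e,n) divides p^(e-1) P(p,n). Conversely, if p is
  not a Wieferich prime then 2^t = 1 + p a with p not dividing a, where t = P(p,1) is the
  order of 2 modulo p, and a lifting-the-exponent computation shows that p^(e-1+k) divides
  P(p^e,p^k). As p does not divide P(p,n'), this forces P(p^e,n) = p^(e-1) P(p,n),
  which together with (1) gives (2) and (3).
*)

theory Submission
  imports Defs "HOL-Library.Z2" "HOL-Computational_Algebra.Polynomial"
begin

lemma smult_sum_right: "smult a (\<Sum>i\<in>S. f i) = (\<Sum>i\<in>S. smult a (f i))"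
  by (induct S rule: infinite_finite_induct) (simp_all add: smult_add_right)

lemma smult_of_nat_eq_mult: "smult (of_nat k) f = of_nat k * f"
  by (simp add: of_nat_poly)

lemma pcompose_monom_left: "pcompose (monom c i) q = smult c (q ^ i)"
  by (induct i) (simp_all add: monom_Suc pcompose_pCons monom_0 mult_smult_right)

lemma pcompose_power_left: "pcompose (f ^ k) q = pcompose f q ^ k"
  by (induct k) (simp_all add: pcompose_1 pcompose_mult)

lemma prime_dvd_add_power_sub_powers:
  fixes a b :: "'a::comm_ring_1"
  assumes p: "prime p"
  shows "of_nat p dvd (a + b) ^ p - a ^ p - b ^ p"
proof -
  define f where "f k = of_nat (p choose k) * a ^ k * b ^ (p - k)" for k
  have p0: "0 < p" using p prime_gt_0_nat by blast
  have "(a + b) ^ p = (\<Sum>k<Suc p. f k)" unfolding f_def binomial_ring lessThan_Suc_atMost ..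
  also have "\<dots> = (\<Sum>k\<in>{0..<p}. f k) + f p" by (simp add: atLeast0LessThan)
  also have "(\<Sum>k\<in>{0..<p}. f k) = f 0 + (\<Sum>k\<in>{1..<p}. f k)"
    using p0 by (simp add: sum.atLeast_Suc_lessThan)
  finally have eq: "(a + b) ^ p - a ^ p - b ^ p = (\<Sum>k\<in>{1..<p}. f k)" by (simp add: f_def)
  have "of_nat p dvd f k" if k: "k \<in> {1..<p}" for k
  proof -
    have "p dvd (p choose k)" using dvd_choose_prime[of k p] k p by auto
    then show ?thesis unfolding f_def by (auto elim!: dvdE simp: mult.assoc)
  qed
  then show ?thesis unfolding eq by (intro dvd_sum) auto
qed

lemma power_add_second_order:
  fixes a b :: "'a::comm_ring_1"
  shows "\<exists>R. (a + b) ^ t = a ^ t + of_nat t * a ^ (t - 1) * b + b ^ 2 * R"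
proof (induct t)
  case 0
  show ?case by (rule exI[of _ 0]) simp
next
  case (Suc t)
  then obtain R where R: "(a + b) ^ t = a ^ t + of_nat t * a ^ (t - 1) * b + b ^ 2 * R" by blast
  show ?case
  proof (cases t)
    case 0
    then show ?thesis by (intro exI[of _ 0]) simp
  next
    case (Suc t')
    have "(a + b) ^ Suc t = (a + b) * (a ^ t + of_nat t * a ^ (t - 1) * b + b ^ 2 * R)"
      using R by simp
    also have "\<dots> = a ^ Suc t + of_nat (Suc t) * a ^ (Suc t - 1) * b
        + b ^ 2 * (of_nat t * a ^ t' + R * (a + b))"
      by (simp add: Suc algebra_simps power2_eq_square)
    finally show ?thesis by blast
  qed
qed

lemma prime_power_dvd_choose_mult_power:
  assumes p: "prime p" "p \<noteq> 2" and j: "1 \<le> j" and i: "2 \<le> i" "i \<le> p"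
  shows "p ^ (j + 2) dvd (p choose i) * (p ^ j) ^ i"
proof (cases "i = p")
  case True
  have "3 \<le> p" using p prime_ge_2_nat[of p] by linarith
  then have "j * 3 \<le> j * p" by simp
  then have "j + 2 \<le> j * p" using j by linarith
  then have "p ^ (j + 2) dvd p ^ (j * p)" by (rule le_imp_power_dvd)
  then show ?thesis unfolding True by (simp add: power_mult)
next
  case False
  then have "p dvd (p choose i)" using dvd_choose_prime[of i p] i p by auto
  moreover have "j * 2 \<le> j * i" using i by simp
  then have "j + 1 \<le> j * i" using j by linarith
  then have "p ^ (j + 1) dvd p ^ (j * i)" by (rule le_imp_power_dvd)
  then have "p ^ (j + 1) dvd (p ^ j) ^ i" by (simp only: power_mult)
  ultimately have "p * p ^ (j + 1) dvd (p choose i) * (p ^ j) ^ i" by (rule mult_dvd_mono)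
  then show ?thesis by simp
qed

lemma power_prime_one_plus_prime_power_mult:
  fixes y :: "'a::comm_ring_1"
  assumes p: "prime p" "p \<noteq> 2" and j: "1 \<le> j"
  shows "\<exists>z. (1 + of_nat p ^ j * y) ^ p = 1 + of_nat p ^ (j + 1) * (y + of_nat p * z)"
proof -
  define b where "b = of_nat p ^ j * y"
  define f where "f i = of_nat (p choose i) * b ^ i" for i
  have "{..p} = insert 0 (insert 1 {2..p})" using p prime_ge_2_nat[of p] by auto
  then have "(b + 1) ^ p = f 0 + f 1 + (\<Sum>i\<in>{2..p}. f i)"
    unfolding binomial_ring f_def by simp
  then have eq: "(1 + b) ^ p - 1 - of_nat p * b = (\<Sum>i\<in>{2..p}. f i)"
    by (simp add: f_def add.commute)
  have "of_nat p ^ (j + 2) dvd f i" if i: "i \<in> {2..p}" for i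
  proof -
    obtain c where c: "(p choose i) * (p ^ j) ^ i = p ^ (j + 2) * c"
      using prime_power_dvd_choose_mult_power[OF p j] i by (auto elim: dvdE)
    have "f i = of_nat ((p choose i) * (p ^ j) ^ i) * y ^ i"
      by (simp add: f_def b_def power_mult_distrib)
    then show ?thesis unfolding c by simp
  qed
  then have "of_nat p ^ (j + 2) dvd (1 + b) ^ p - 1 - of_nat p * b"
    unfolding eq by (intro dvd_sum) auto
  then obtain z where "(1 + b) ^ p - 1 - of_nat p * b = of_nat p ^ (j + 2) * z" by (auto elim: dvdE)
  then have "(1 + b) ^ p = 1 + of_nat p ^ (j + 1) * (y + of_nat p * z)"
    unfolding b_def by (simp add: algebra_simps eq_diff_eq)
  then show ?thesis unfolding b_def by blast
qed

lemma power_prime_power_one_plus_prime_mult: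
  fixes w :: "'a::comm_ring_1"
  assumes p: "prime p" "p \<noteq> 2"
  shows "\<exists>z. (1 + of_nat p * w) ^ (p ^ a) = 1 + of_nat p ^ (a + 1) * (w + of_nat p * z)"
proof (induct a)
  case 0
  show ?case by (rule exI[of _ 0]) simp
next
  case (Suc a)
  then obtain z where z: "(1 + of_nat p * w) ^ (p ^ a) = 1 + of_nat p ^ (a + 1) * (w + of_nat p * z)"
    by blast
  obtain z' where z': "(1 + of_nat p ^ (a + 1) * (w + of_nat p * z)) ^ p
      = 1 + of_nat p ^ (a + 1 + 1) * ((w + of_nat p * z) + of_nat p * z')"
    using power_prime_one_plus_prime_power_mult[OF p, of "a + 1" "w + of_nat p * z"] by auto
  have "(1 + of_nat p * w) ^ (p ^ Suc a) = ((1 + of_nat p * w) ^ (p ^ a)) ^ p"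
    by (simp add: power_mult[symmetric] mult.commute)
  also have "\<dots> = 1 + of_nat p ^ (Suc a + 1) * (w + of_nat p * (z + z'))"
    unfolding z z' by (simp add: algebra_simps)
  finally show ?case by blast
qed

lemma power_one_plus_prime_mult:
  fixes w :: "'a::comm_ring_1"
  assumes p: "prime p" "p \<noteq> 2"
  shows "\<exists>z. (1 + of_nat p * w) ^ (p ^ a * s) = 1 + of_nat p ^ (a + 1) * (of_nat s * w + of_nat p * z)"
proof -
  obtain z where z: "(1 + of_nat p * w) ^ (p ^ a) = 1 + of_nat p ^ (a + 1) * (w + of_nat p * z)"
    using power_prime_power_one_plus_prime_mult[OF p] by blast
  define y where "y = w + of_nat p * z"
  obtain R where R: "(1 + of_nat p ^ (a + 1) * y) ^ s
      = 1 ^ s + of_nat s * 1 ^ (s - 1) * (of_nat p ^ (a + 1) * y) + (of_nat p ^ (a + 1) * y) ^ 2 * R"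
    using power_add_second_order by blast
  have "(1 + of_nat p * w) ^ (p ^ a * s) = (1 + of_nat p ^ (a + 1) * y) ^ s"
    by (simp add: power_mult z y_def)
  also have "\<dots> = 1 + of_nat p ^ (a + 1) * (of_nat s * w + of_nat p * (of_nat s * z + of_nat p ^ a * y ^ 2 * R))"
    unfolding R by (simp add: y_def algebra_simps power2_eq_square)
  finally show ?thesis by blast
qed

lemma dvd_power_mult_cancel_unit_mod:
  fixes v y c a :: "'a::comm_ring_1"
  assumes vy: "v * y = 1 - c" and dvd: "c dvd v ^ K * a"
  shows "c dvd a"
proof -
  have "c dvd 1 - (1 - c) ^ K"
    using one_diff_power_eq[of "1 - c" K] by simp
  then have "c dvd a * (1 - (1 - c) ^ K)" by simp
  moreover have "a * (1 - c) ^ K = (v ^ K * a) * y ^ K"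
    unfolding vy[symmetric] power_mult_distrib by (simp add: ac_simps)
  then have "c dvd a * (1 - c) ^ K" using dvd by simp
  ultimately have "c dvd a * (1 - (1 - c) ^ K) + a * (1 - c) ^ K" by (rule dvd_add)
  then show ?thesis by (simp add: algebra_simps)
qed

lemma prime_not_dvd_power_two:
  assumes "prime p" and "p \<noteq> 2"
  shows "\<not> int p dvd 2 ^ K"
proof
  assume "int p dvd 2 ^ K"
  moreover have "prime (int p)" using assms(1) by simp
  ultimately have "int p dvd 2" using prime_dvd_power by blast
  then have "p dvd 2" by presburger
  then show False using assms prime_ge_2_nat[of p] dvd_imp_le[of p 2] by simp
qed

lemma nat_mod_add:
  "0 < m \<Longrightarrow> nat ((a + b) mod int m) = (nat (a mod int m) + nat (b mod int m)) mod m"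
proof -
  assume m: "0 < m"
  have "nat ((a + b) mod int m) = nat ((a mod int m + b mod int m) mod int m)"
    by (simp add: mod_add_eq)
  also have "\<dots> = nat (a mod int m + b mod int m) mod m"
    using m by (simp add: nat_mod_distrib)
  also have "nat (a mod int m + b mod int m) = nat (a mod int m) + nat (b mod int m)"
    using m by (simp add: nat_add_distrib)
  finally show ?thesis .
qed

section \<open>The ideal generated by m and x^n - 1\<close>

definition x_pow_minus_1 :: "nat \<Rightarrow> int poly" where
  "x_pow_minus_1 n = monom 1 n - 1"

definition cyc_ideal :: "nat \<Rightarrow> nat \<Rightarrow> int poly set" where
  "cyc_ideal m n = {f. \<exists>q r. f = x_pow_minus_1 n * q + smult (int m) r}"

lemma x_pow_minus_1_mult_in_cyc_ideal: "x_pow_minus_1 n * q \<in> cyc_ideal m n"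
  unfolding cyc_ideal_def by (intro CollectI exI[of _ q] exI[of _ 0]) simp

lemma smult_in_cyc_ideal: "smult (int m) r \<in> cyc_ideal m n"
  unfolding cyc_ideal_def by (intro CollectI exI[of _ 0] exI[of _ r]) simp

lemma zero_in_cyc_ideal [simp]: "0 \<in> cyc_ideal m n"
  using smult_in_cyc_ideal[of m 0] by simp

lemma cyc_ideal_1 [simp]: "cyc_ideal 1 n = UNIV"
  using smult_in_cyc_ideal[of 1] by auto

lemma cyc_ideal_add: "f \<in> cyc_ideal m n \<Longrightarrow> g \<in> cyc_ideal m n \<Longrightarrow> f + g \<in> cyc_ideal m n"
proof -
  assume "f \<in> cyc_ideal m n" "g \<in> cyc_ideal m n"
  then obtain q r q' r' where "f = x_pow_minus_1 n * q + smult (int m) r"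
    and "g = x_pow_minus_1 n * q' + smult (int m) r'"
    unfolding cyc_ideal_def by blast
  then have "f + g = x_pow_minus_1 n * (q + q') + smult (int m) (r + r')"
    by (simp add: algebra_simps smult_add_right)
  then show ?thesis unfolding cyc_ideal_def by blast
qed

lemma cyc_ideal_mult_left: "f \<in> cyc_ideal m n \<Longrightarrow> g * f \<in> cyc_ideal m n"
proof -
  assume "f \<in> cyc_ideal m n"
  then obtain q r where "f = x_pow_minus_1 n * q + smult (int m) r"
    unfolding cyc_ideal_def by blast
  then have "g * f = x_pow_minus_1 n * (g * q) + smult (int m) (g * r)"
    by (simp add: algebra_simps)
  then show ?thesis unfolding cyc_ideal_def by blast
qed

lemma cyc_ideal_mult_right: "f \<in> cyc_ideal m n \<Longrightarrow> f * g \<in> cyc_ideal m n"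
  using cyc_ideal_mult_left[of f m n g] by (simp add: mult.commute)

lemma cyc_ideal_uminus: "f \<in> cyc_ideal m n \<Longrightarrow> - f \<in> cyc_ideal m n"
  using cyc_ideal_mult_left[of f m n "- 1"] by simp

lemma cyc_ideal_diff: "f \<in> cyc_ideal m n \<Longrightarrow> g \<in> cyc_ideal m n \<Longrightarrow> f - g \<in> cyc_ideal m n"
  using cyc_ideal_add[of f m n "- g"] cyc_ideal_uminus[of g m n] by simp

lemma cyc_ideal_sum:
  "(\<And>i. i \<in> A \<Longrightarrow> f i \<in> cyc_ideal m n) \<Longrightarrow> (\<Sum>i\<in>A. f i) \<in> cyc_ideal m n"
  by (induct A rule: infinite_finite_induct) (simp_all add: cyc_ideal_add)

lemma cyc_ideal_mult:
  assumes "f \<in> cyc_ideal a n" and "g \<in> cyc_ideal b n"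
  shows "f * g \<in> cyc_ideal (a * b) n"
proof -
  obtain q r q' r' where f: "f = x_pow_minus_1 n * q + smult (int a) r"
    and g: "g = x_pow_minus_1 n * q' + smult (int b) r'"
    using assms unfolding cyc_ideal_def by blast
  have "f * g = x_pow_minus_1 n * (q * g + smult (int a) (r * q')) + smult (int (a * b)) (r * r')"
    by (simp add: f g algebra_simps)
  then show ?thesis unfolding cyc_ideal_def by blast
qed

lemma x_pow_minus_1_dvd: "n' dvd n \<Longrightarrow> x_pow_minus_1 n' dvd x_pow_minus_1 n"
proof -
  assume "n' dvd n"
  then obtain c where c: "n = n' * c" by auto
  have "x_pow_minus_1 n = (monom 1 n') ^ c - 1" by (simp add: x_pow_minus_1_def c monom_power)
  also have "\<dots> = x_pow_minus_1 n' * (\<Sum>i<c. (monom 1 n') ^ i)"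
    unfolding power_diff_1_eq x_pow_minus_1_def ..
  finally show ?thesis by simp
qed

lemma cyc_ideal_mono: "m' dvd m \<Longrightarrow> n' dvd n \<Longrightarrow> cyc_ideal m n \<subseteq> cyc_ideal m' n'"
proof
  fix f assume "m' dvd m" "n' dvd n" "f \<in> cyc_ideal m n"
  moreover from this obtain c d where "m = m' * c" and "x_pow_minus_1 n = x_pow_minus_1 n' * d"
    using x_pow_minus_1_dvd by (metis dvdE)
  moreover from calculation obtain q r where "f = x_pow_minus_1 n * q + smult (int m) r"
    unfolding cyc_ideal_def by blast
  ultimately have "f = x_pow_minus_1 n' * (d * q) + smult (int m') (smult (int c) r)"
    by (simp add: algebra_simps)
  then show "f \<in> cyc_ideal m' n'" unfolding cyc_ideal_def by blast
qed

lemma of_nat_dvd_in_cyc_ideal: "(of_nat m :: int poly) dvd f \<Longrightarrow> f \<in> cyc_ideal m n"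
  by (auto simp: of_nat_poly smult_in_cyc_ideal elim!: dvdE)

lemma cyc_ideal_diff_cong: "a - b \<in> cyc_ideal m n \<Longrightarrow> a \<in> cyc_ideal m n \<longleftrightarrow> b \<in> cyc_ideal m n"
  using cyc_ideal_add cyc_ideal_diff by fastforce

lemma cyc_ideal_mult_diff:
  assumes "a - a' \<in> cyc_ideal m n" and "b - b' \<in> cyc_ideal m n"
  shows "a * b - a' * b' \<in> cyc_ideal m n"
proof -
  have "a * b - a' * b' = (a - a') * b + a' * (b - b')" by (simp add: algebra_simps)
  then show ?thesis
    using cyc_ideal_add[OF cyc_ideal_mult_right[OF assms(1)] cyc_ideal_mult_left[OF assms(2)]] by simp
qed

lemma cyc_ideal_power_diff: "a - b \<in> cyc_ideal m n \<Longrightarrow> a ^ k - b ^ k \<in> cyc_ideal m n"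
  by (induct k) (simp_all add: cyc_ideal_mult_diff)

definition folded_coeff :: "nat \<Rightarrow> int poly \<Rightarrow> nat \<Rightarrow> int" where
  "folded_coeff n f r = (\<Sum>l\<le>degree f. if l mod n = r then coeff f l else 0)"

lemma folded_coeff_bound:
  assumes "degree f \<le> B"
  shows "folded_coeff n f r = (\<Sum>l\<le>B. if l mod n = r then coeff f l else 0)"
  unfolding folded_coeff_def
  by (rule sum.mono_neutral_left) (use assms in \<open>auto simp: coeff_eq_0\<close>)

lemma folded_coeff_0 [simp]: "folded_coeff n 0 r = 0"
  unfolding folded_coeff_def by (simp cong: if_cong)

lemma folded_coeff_add: "folded_coeff n (f + g) r = folded_coeff n f r + folded_coeff n g r"
proof -
  define B where "B = max (degree f) (degree g)"
  have "degree (f + g) \<le> B" "degree f \<le> B" "degree g \<le> B"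
    unfolding B_def using degree_add_le_max[of f g] by auto
  then show ?thesis
    by (simp add: folded_coeff_bound[of _ B] sum.distrib[symmetric] if_distrib) (rule sum.cong, auto)
qed

lemma folded_coeff_uminus: "folded_coeff n (- f) r = - folded_coeff n f r"
  unfolding folded_coeff_def by (simp add: sum_negf[symmetric] if_distrib cong: if_cong)

lemma folded_coeff_diff: "folded_coeff n (f - g) r = folded_coeff n f r - folded_coeff n g r"
  using folded_coeff_add[of n f "- g" r] folded_coeff_uminus[of n g r] by simp

lemma folded_coeff_smult: "folded_coeff n (smult c f) r = c * folded_coeff n f r"
  by (cases "c = 0") (simp_all add: folded_coeff_def sum_distrib_left if_distrib cong: if_cong)

lemma folded_coeff_sum: "folded_coeff n (\<Sum>i\<in>A. f i) r = (\<Sum>i\<in>A. folded_coeff n (f i) r)"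
  by (induct A rule: infinite_finite_induct) (simp_all add: folded_coeff_add)

lemma folded_coeff_monom: "folded_coeff n (monom c l) r = (if l mod n = r then c else 0)"
proof -
  have "folded_coeff n (monom c l) r = (\<Sum>j\<le>l. if j mod n = r then coeff (monom c l) j else 0)"
    by (rule folded_coeff_bound) (simp add: degree_monom_le)
  also have "\<dots> = (\<Sum>j\<in>{l}. if j mod n = r then coeff (monom c l) j else 0)"
    by (rule sum.mono_neutral_right) (auto simp: coeff_monom)
  finally show ?thesis by (simp add: coeff_monom)
qed

lemma folded_coeff_monom_mult:
  "folded_coeff n (monom 1 s * q) r = (\<Sum>l\<le>degree q. if (l + s) mod n = r then coeff q l else 0)"
proof -
  have "monom 1 s * q = (\<Sum>l\<le>degree q. monom (coeff q l) (l + s))"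
    by (subst (1) poly_as_sum_of_monoms[symmetric]) (simp add: sum_distrib_left mult_monom add.commute)
  then show ?thesis by (simp add: folded_coeff_sum folded_coeff_monom)
qed

lemma folded_coeff_x_pow_minus_1_mult: "0 < n \<Longrightarrow> folded_coeff n (x_pow_minus_1 n * q) r = 0"
  by (simp add: x_pow_minus_1_def left_diff_distrib folded_coeff_diff folded_coeff_monom_mult)
    (simp add: folded_coeff_def)

lemma folded_coeff_1: "folded_coeff 1 f 0 = poly f 1"
  unfolding folded_coeff_def poly_altdef by simp

definition reduce_mod :: "nat \<Rightarrow> int poly \<Rightarrow> int poly" where
  "reduce_mod n f = (\<Sum>r<n. monom (folded_coeff n f r) r)"

lemma reduce_mod_altdef:
  assumes n: "0 < n"
  shows "reduce_mod n f = (\<Sum>l\<le>degree f. monom (coeff f l) (l mod n))"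
proof (rule poly_eqI)
  fix j
  have "coeff (\<Sum>l\<le>degree f. monom (coeff f l) (l mod n)) j =
        (\<Sum>l\<le>degree f. if l mod n = j then coeff f l else 0)"
    by (simp add: coeff_sum coeff_monom eq_commute)
  also have "\<dots> = (if j < n then folded_coeff n f j else 0)"
  proof (cases "j < n")
    case False
    then have "l mod n \<noteq> j" for l using n by (metis mod_less_divisor)
    then show ?thesis using False by simp
  qed (simp add: folded_coeff_def)
  finally show "coeff (reduce_mod n f) j = coeff (\<Sum>l\<le>degree f. monom (coeff f l) (l mod n)) j"
    unfolding reduce_mod_def by (simp add: coeff_sum coeff_monom)
qed

lemma x_pow_minus_1_dvd_reduce_mod:
  assumes n: "0 < n"
  shows "x_pow_minus_1 n dvd f - reduce_mod n f"
proof -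
  have "monom c l - monom c (l mod n) = monom c (l mod n) * x_pow_minus_1 (n * (l div n))"
    for c :: int and l
    by (simp add: x_pow_minus_1_def right_diff_distrib mult_monom)
  then have "f - reduce_mod n f =
      (\<Sum>l\<le>degree f. monom (coeff f l) (l mod n) * x_pow_minus_1 (n * (l div n)))"
    unfolding reduce_mod_altdef[OF n]
    by (subst (1) poly_as_sum_of_monoms[symmetric]) (simp add: sum_subtractf[symmetric])
  then show ?thesis by (simp only:) (intro dvd_sum, rule dvd_mult, rule x_pow_minus_1_dvd, simp)
qed

lemma cyc_ideal_iff_folded_coeff:
  assumes n: "0 < n"
  shows "f \<in> cyc_ideal m n \<longleftrightarrow> (\<forall>r<n. int m dvd folded_coeff n f r)"
proof
  assume "f \<in> cyc_ideal m n"
  then show "\<forall>r<n. int m dvd folded_coeff n f r"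
    unfolding cyc_ideal_def using n
    by (auto simp: folded_coeff_add folded_coeff_x_pow_minus_1_mult folded_coeff_smult)
next
  assume h: "\<forall>r<n. int m dvd folded_coeff n f r"
  define k where "k r = folded_coeff n f r div int m" for r
  have "reduce_mod n f = smult (int m) (\<Sum>r<n. monom (k r) r)"
    unfolding reduce_mod_def smult_sum_right
    by (rule sum.cong) (use h in \<open>auto simp: k_def smult_monom\<close>)
  moreover obtain q where "f - reduce_mod n f = x_pow_minus_1 n * q"
    using x_pow_minus_1_dvd_reduce_mod[OF n] by (auto elim: dvdE)
  ultimately have "f = x_pow_minus_1 n * q + smult (int m) (\<Sum>r<n. monom (k r) r)"
    by (metis diff_add_cancel)
  then show "f \<in> cyc_ideal m n" unfolding cyc_ideal_def by blast
qed

lemma cyc_ideal_1_iff: "f \<in> cyc_ideal m 1 \<longleftrightarrow> int m dvd poly f 1"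
proof -
  have "f \<in> cyc_ideal m 1 \<longleftrightarrow> (\<forall>r<1. int m dvd folded_coeff 1 f r)"
    by (rule cyc_ideal_iff_folded_coeff) simp
  also have "\<dots> \<longleftrightarrow> int m dvd folded_coeff 1 f 0" by auto
  finally show ?thesis unfolding folded_coeff_1 .
qed

section \<open>Vectors as polynomials and periods\<close>

definition one_plus_x :: "int poly" where
  "one_plus_x = [:1, 1:]"

lemma one_plus_x_altdef: "one_plus_x = 1 + monom 1 1"
  by (simp add: one_plus_x_def monom_Suc one_pCons)

text \<open>Entry i of the vector of f is the coefficient of x^(-i) in f modulo (m, x^n - 1);
  with this orientation T becomes multiplication by 1 + x.\<close>

definition vec_of_poly :: "nat \<Rightarrow> nat \<Rightarrow> int poly \<Rightarrow> nat \<Rightarrow> nat" where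
  "vec_of_poly m n f =
     (\<lambda>i. if i < n then nat (folded_coeff n f ((n - i) mod n) mod int m) else 0)"

definition poly_of_vec :: "nat \<Rightarrow> (nat \<Rightarrow> nat) \<Rightarrow> int poly" where
  "poly_of_vec n a = (\<Sum>i<n. monom (int (a i)) ((n - i) mod n))"

lemma minus_mod_minus_mod:
  fixes n r :: nat
  assumes "r < n"
  shows "(n - (n - r) mod n) mod n = r"
  using assms by (cases "r = 0") simp_all

lemma minus_mod_inj: "i < (n::nat) \<Longrightarrow> j < n \<Longrightarrow> (n - i) mod n = (n - j) mod n \<Longrightarrow> i = j"
  by (metis minus_mod_minus_mod)

lemma minus_mod_Suc:
  fixes n i :: nat
  assumes i: "i < n"
  shows "((n - i) mod n + n - 1) mod n = (n - Suc i mod n) mod n"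
proof (cases "Suc i < n")
  case True
  show ?thesis
  proof (cases "i = 0")
    case False
    then have "(n - i) mod n = n - i" using True by simp
    then have "(n - i) mod n + n - 1 = n + (n - Suc i)" using True by arith
    then have "((n - i) mod n + n - 1) mod n = (n + (n - Suc i)) mod n" by (simp only:)
    also have "\<dots> = n - Suc i" using True by (simp only: mod_add_self1) simp
    finally show ?thesis using True by simp
  qed (use True in simp)
next
  case False
  with i have "Suc i = n" by simp
  then show ?thesis by (cases "n = 1") simp_all
qed

lemma vec_of_poly_eq_iff:
  assumes n: "0 < n" and m: "0 < m"
  shows "vec_of_poly m n f = vec_of_poly m n g \<longleftrightarrow> f - g \<in> cyc_ideal m n"
proof -
  have mod_eq: "nat (a mod int m) = nat (b mod int m) \<longleftrightarrow> int m dvd a - b" for a b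
    using m by (simp add: nat_eq_iff2 mod_eq_dvd_iff dvd_diff_commute)
  have "vec_of_poly m n f = vec_of_poly m n g \<longleftrightarrow>
        (\<forall>i<n. int m dvd folded_coeff n (f - g) ((n - i) mod n))"
    by (simp add: fun_eq_iff vec_of_poly_def folded_coeff_diff mod_eq)
  also have "\<dots> \<longleftrightarrow> (\<forall>r<n. int m dvd folded_coeff n (f - g) r)"
  proof
    assume h: "\<forall>i<n. int m dvd folded_coeff n (f - g) ((n - i) mod n)"
    show "\<forall>r<n. int m dvd folded_coeff n (f - g) r"
    proof (intro allI impI)
      fix r assume "r < n"
      then show "int m dvd folded_coeff n (f - g) r"
        using h[rule_format, of "(n - r) mod n"] n by (simp add: minus_mod_minus_mod)
    qed
  qed (use n in simp)
  finally show ?thesis by (simp add: cyc_ideal_iff_folded_coeff[OF n])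
qed

lemma folded_coeff_x_mult:
  assumes n: "0 < n" and r: "r < n"
  shows "folded_coeff n (monom 1 1 * f) r = folded_coeff n f ((r + n - 1) mod n)"
proof -
  have "(l + 1) mod n = r \<longleftrightarrow> l mod n = (r + n - 1) mod n" for l
  proof -
    have "(l + 1) mod n = r \<longleftrightarrow> (l + 1 + (n - 1)) mod n = (r + (n - 1)) mod n"
      using r cong_add_rcancel_nat[of "l + 1" "n - 1" r n] unfolding cong_def by simp
    also have "l + 1 + (n - 1) = l + n" using n by simp
    also have "r + (n - 1) = r + n - 1" using n by simp
    finally show ?thesis by simp
  qed
  then show ?thesis unfolding folded_coeff_monom_mult by (simp add: folded_coeff_def)
qed

lemma vec_of_poly_one_plus_x_mult:
  assumes n: "0 < n" and m: "0 < m"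
  shows "vec_of_poly m n (one_plus_x * f) = Tmap m n (vec_of_poly m n f)"
proof
  fix i
  show "vec_of_poly m n (one_plus_x * f) i = Tmap m n (vec_of_poly m n f) i"
  proof (cases "i < n")
    case True
    have r: "(n - i) mod n < n" using n by simp
    have "folded_coeff n (one_plus_x * f) ((n - i) mod n) =
          folded_coeff n f ((n - i) mod n) + folded_coeff n f ((n - Suc i mod n) mod n)"
      unfolding one_plus_x_altdef distrib_right mult_1_left folded_coeff_add
        folded_coeff_x_mult[OF n r] minus_mod_Suc[OF True] ..
    then show ?thesis using True n m by (simp add: vec_of_poly_def Tmap_def nat_mod_add)
  qed (simp add: vec_of_poly_def Tmap_def)
qed

lemma funpow_Tmap_vec_of_poly:
  assumes "0 < n" and "0 < m"
  shows "(Tmap m n ^^ k) (vec_of_poly m n f) = vec_of_poly m n (one_plus_x ^ k * f)"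
  by (induct k) (simp_all add: vec_of_poly_one_plus_x_mult[OF assms, symmetric] mult.assoc)

lemma vec_of_poly_in_vecs: "0 < m \<Longrightarrow> vec_of_poly m n f \<in> vecs m n"
  by (auto simp: vecs_def vec_of_poly_def nat_less_iff)

lemma vec_of_poly_of_vec:
  assumes n: "0 < n" and a: "a \<in> vecs m n"
  shows "vec_of_poly m n (poly_of_vec n a) = a"
proof
  fix j
  show "vec_of_poly m n (poly_of_vec n a) j = a j"
  proof (cases "j < n")
    case True
    have "folded_coeff n (poly_of_vec n a) ((n - j) mod n) = (\<Sum>i<n. if i = j then int (a i) else 0)"
      unfolding poly_of_vec_def folded_coeff_sum folded_coeff_monom
      by (rule sum.cong) (use True minus_mod_inj[of _ n j] in auto)
    then show ?thesis using True a by (simp add: vec_of_poly_def vecs_def)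
  qed (use a in \<open>simp add: vec_of_poly_def vecs_def\<close>)
qed

lemma finite_vecs: "finite (vecs m n)"
proof -
  define L where "L = {xs. set xs \<subseteq> {..<m} \<and> length xs = n}"
  define extend where "extend xs i = (if i < n then xs ! i else 0)" for xs :: "nat list" and i
  have "vecs m n \<subseteq> extend ` L"
  proof
    fix a assume "a \<in> vecs m n"
    then have "a = extend (map a [0..<n])" and "map a [0..<n] \<in> L"
      by (auto simp: vecs_def L_def extend_def)
    then show "a \<in> extend ` L" by blast
  qed
  moreover have "finite L"
    unfolding L_def by (rule finite_lists_length_eq) simp
  ultimately show ?thesis by (meson finite_imageI finite_subset)
qed

definition eventual_period :: "nat \<Rightarrow> nat \<Rightarrow> int poly \<Rightarrow> nat \<Rightarrow> bool" where
  "eventual_period m n f P \<longleftrightarrow> (\<exists>K. one_plus_x ^ K * (one_plus_x ^ P - 1) * f \<in> cyc_ideal m n)"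

definition is_period :: "nat \<Rightarrow> nat \<Rightarrow> nat \<Rightarrow> bool" where
  "is_period m n P \<longleftrightarrow> (\<exists>K. one_plus_x ^ K * (one_plus_x ^ P - 1) \<in> cyc_ideal m n)"

definition min_period :: "nat \<Rightarrow> nat \<Rightarrow> nat" where
  "min_period m n = (LEAST P. 0 < P \<and> is_period m n P)"

lemma eventual_period_one: "eventual_period m n 1 P \<longleftrightarrow> is_period m n P"
  by (simp add: eventual_period_def is_period_def)

lemma is_period_imp_eventual_period: "is_period m n P \<Longrightarrow> eventual_period m n f P"
  unfolding is_period_def eventual_period_def using cyc_ideal_mult_right by blast

lemma cycle_len_vec_of_poly:
  assumes n: "0 < n" and m: "0 < m"
  shows "cycle_len m n (vec_of_poly m n f) = (LEAST P. 0 < P \<and> eventual_period m n f P)"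
proof -
  let ?T = "\<lambda>k. (Tmap m n ^^ k) (vec_of_poly m n f)"
  have step: "?T (k + P) = ?T k \<longleftrightarrow> one_plus_x ^ k * (one_plus_x ^ P - 1) * f \<in> cyc_ideal m n"
    for k P
    by (simp add: funpow_Tmap_vec_of_poly[OF n m] vec_of_poly_eq_iff[OF n m] power_add algebra_simps)
  have "(\<exists>N. \<forall>k\<ge>N. ?T (k + P) = ?T k) \<longleftrightarrow> eventual_period m n f P" for P
  proof
    assume "\<exists>N. \<forall>k\<ge>N. ?T (k + P) = ?T k"
    then show "eventual_period m n f P" unfolding eventual_period_def step by blast
  next
    assume "eventual_period m n f P"
    then obtain K where K: "one_plus_x ^ K * (one_plus_x ^ P - 1) * f \<in> cyc_ideal m n"
      unfolding eventual_period_def by blast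
    have "?T (k + P) = ?T k" if "K \<le> k" for k
    proof -
      from that obtain d where "k = d + K" using le_Suc_ex by (metis add.commute)
      then show ?thesis
        unfolding step using cyc_ideal_mult_left[OF K, of "one_plus_x ^ d"]
        by (simp add: power_add mult.assoc)
    qed
    then show "\<exists>N. \<forall>k\<ge>N. ?T (k + P) = ?T k" by blast
  qed
  then show ?thesis unfolding cycle_len_def by simp
qed

lemma is_period_0: "is_period m n 0"
  unfolding is_period_def by simp

lemma is_period_add:
  assumes "is_period m n P" and "is_period m n Q"
  shows "is_period m n (P + Q)"
proof -
  obtain K1 K2 where K1: "one_plus_x ^ K1 * (one_plus_x ^ P - 1) \<in> cyc_ideal m n"
    and K2: "one_plus_x ^ K2 * (one_plus_x ^ Q - 1) \<in> cyc_ideal m n"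
    using assms unfolding is_period_def by blast
  have "one_plus_x ^ (K1 + K2) * (one_plus_x ^ (P + Q) - 1) =
        (one_plus_x ^ K2 * one_plus_x ^ Q) * (one_plus_x ^ K1 * (one_plus_x ^ P - 1)) +
        one_plus_x ^ K1 * (one_plus_x ^ K2 * (one_plus_x ^ Q - 1))"
    by (simp add: power_add algebra_simps)
  also have "\<dots> \<in> cyc_ideal m n" by (intro cyc_ideal_add cyc_ideal_mult_left K1 K2)
  finally show ?thesis unfolding is_period_def by blast
qed

lemma is_period_diff:
  assumes "is_period m n P" and "is_period m n Q" and "Q \<le> P"
  shows "is_period m n (P - Q)"
proof -
  obtain K1 K2 where K1: "one_plus_x ^ K1 * (one_plus_x ^ P - 1) \<in> cyc_ideal m n"
    and K2: "one_plus_x ^ K2 * (one_plus_x ^ Q - 1) \<in> cyc_ideal m n"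
    using assms unfolding is_period_def by blast
  obtain d where d: "P = Q + d" using assms(3) le_Suc_ex by blast
  have "one_plus_x ^ (K1 + K2 + Q) * (one_plus_x ^ (P - Q) - 1) =
        one_plus_x ^ K2 * (one_plus_x ^ K1 * (one_plus_x ^ P - 1)) -
        one_plus_x ^ K1 * (one_plus_x ^ K2 * (one_plus_x ^ Q - 1))"
    unfolding d by (simp add: power_add algebra_simps)
  also have "\<dots> \<in> cyc_ideal m n" by (intro cyc_ideal_diff cyc_ideal_mult_left K1 K2)
  finally show ?thesis unfolding is_period_def by blast
qed

lemma is_period_mult: "is_period m n P \<Longrightarrow> is_period m n (c * P)"
  by (induct c) (simp_all add: is_period_0 is_period_add)

lemma is_period_mono: "m' dvd m \<Longrightarrow> n' dvd n \<Longrightarrow> is_period m n P \<Longrightarrow> is_period m' n' P"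
  unfolding is_period_def using cyc_ideal_mono by blast

lemma is_period_mult_power_form:
  assumes "is_period m n (M * s)" and "0 < M"
  obtains K where "(one_plus_x ^ M) ^ K * ((one_plus_x ^ M) ^ s - 1) \<in> cyc_ideal m n"
proof -
  obtain K where K: "one_plus_x ^ K * (one_plus_x ^ (M * s) - 1) \<in> cyc_ideal m n"
    using assms(1) unfolding is_period_def by blast
  have "K \<le> M * K" using assms(2) by simp
  have "one_plus_x ^ (M * K - K) * (one_plus_x ^ K * (one_plus_x ^ (M * s) - 1)) \<in> cyc_ideal m n"
    by (rule cyc_ideal_mult_left[OF K])
  also have "one_plus_x ^ (M * K - K) * (one_plus_x ^ K * (one_plus_x ^ (M * s) - 1))
      = one_plus_x ^ (M * K - K + K) * (one_plus_x ^ (M * s) - 1)"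
    by (simp only: power_add mult.assoc)
  also have "M * K - K + K = M * K" using \<open>K \<le> M * K\<close> by simp
  finally show ?thesis using that by (simp add: power_mult)
qed

lemma is_period_exists:
  assumes n: "0 < n" and m: "0 < m"
  shows "\<exists>P>0. is_period m n P"
proof -
  define g where "g k = vec_of_poly m n (one_plus_x ^ k * 1)" for k
  have "range g \<subseteq> vecs m n" using vec_of_poly_in_vecs[OF m] by (auto simp: g_def)
  then have "\<not> inj g" using finite_vecs finite_subset finite_imageD by blast
  then obtain i j where "g i = g j" "i \<noteq> j" unfolding inj_def by blast
  then obtain i j where ij: "g i = g j" "i < j"
    by (cases "i < j") (auto dest: sym simp: not_less_iff_gr_or_eq)
  then obtain d where d: "j = i + d" "0 < d" using less_imp_add_positive by blast
  have "one_plus_x ^ j - one_plus_x ^ i \<in> cyc_ideal m n"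
    using ij(1)[symmetric] unfolding g_def vec_of_poly_eq_iff[OF n m] by simp
  then have "one_plus_x ^ i * (one_plus_x ^ d - 1) \<in> cyc_ideal m n"
    by (simp add: d power_add algebra_simps)
  then show ?thesis using d unfolding is_period_def by blast
qed

context
  fixes m n :: nat
  assumes n: "0 < n" and m: "0 < m"
begin

lemma min_period_pos: "0 < min_period m n"
  and is_period_min_period: "is_period m n (min_period m n)"
  using LeastI_ex[OF is_period_exists[OF n m]] unfolding min_period_def by auto

lemma is_period_iff_min_period_dvd: "is_period m n P \<longleftrightarrow> min_period m n dvd P"
proof
  assume "min_period m n dvd P"
  then show "is_period m n P"
    using is_period_mult[OF is_period_min_period] by (auto elim!: dvdE simp: mult.commute)
next
  assume P: "is_period m n P"
  have "is_period m n (P - P div min_period m n * min_period m n)"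
    by (rule is_period_diff[OF P is_period_mult[OF is_period_min_period]]) (simp add: div_times_less_eq_dividend)
  then have "is_period m n (P mod min_period m n)" by (simp add: minus_div_mult_eq_mod)
  show "min_period m n dvd P"
  proof (rule ccontr)
    assume "\<not> min_period m n dvd P"
    then have "0 < P mod min_period m n" by (simp add: mod_greater_zero_iff_not_dvd)
    with \<open>is_period m n (P mod min_period m n)\<close>
    have "min_period m n \<le> P mod min_period m n"
      unfolding min_period_def by (simp add: Least_le)
    with mod_less_divisor[OF min_period_pos, of P] show False by simp
  qed
qed

lemma Pmax_eq_min_period: "Pmax m n = min_period m n"
proof -
  have le: "cycle_len m n a \<le> min_period m n" if a: "a \<in> vecs m n" for a
  proof -
    have "cycle_len m n a = (LEAST P. 0 < P \<and> eventual_period m n (poly_of_vec n a) P)"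
      using cycle_len_vec_of_poly[OF n m, of "poly_of_vec n a"] vec_of_poly_of_vec[OF n a] by simp
    also have "\<dots> \<le> min_period m n"
      by (rule Least_le) (use min_period_pos is_period_min_period is_period_imp_eventual_period in auto)
    finally show ?thesis .
  qed
  have "cycle_len m n (vec_of_poly m n 1) = min_period m n"
    unfolding cycle_len_vec_of_poly[OF n m] eventual_period_one min_period_def ..
  then have "min_period m n \<in> cycle_len m n ` vecs m n"
    using vec_of_poly_in_vecs[OF m] by (metis image_eqI)
  then show ?thesis
    unfolding Pmax_def using le finite_vecs by (intro Max_eqI) auto
qed

end

lemma min_period_dvd_min_period:
  assumes "m' dvd m" "n' dvd n" "0 < m'" "0 < n'" "0 < m" "0 < n"
  shows "min_period m' n' dvd min_period m n"
proof -
  have "is_period m' n' (min_period m n)"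
    using assms is_period_mono is_period_min_period by blast
  then show ?thesis using assms is_period_iff_min_period_dvd by blast
qed

section \<open>Prime modulus\<close>

lemma one_plus_x_power_prime_power_cong:
  assumes p: "prime p"
  shows "one_plus_x ^ (p ^ j) - (1 + monom 1 (p ^ j)) \<in> cyc_ideal p n"
proof (induct j)
  case 0
  then show ?case by (simp add: one_plus_x_altdef)
next
  case (Suc j)
  have "(one_plus_x ^ (p ^ j)) ^ p - (1 + monom 1 (p ^ j)) ^ p \<in> cyc_ideal p n"
    by (rule cyc_ideal_power_diff[OF Suc])
  moreover have "(1 + monom 1 (p ^ j)) ^ p - 1 ^ p - (monom 1 (p ^ j)) ^ p \<in> cyc_ideal p n"
    by (rule of_nat_dvd_in_cyc_ideal, rule prime_dvd_add_power_sub_powers[OF p])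
  ultimately have "((one_plus_x ^ (p ^ j)) ^ p - (1 + monom 1 (p ^ j)) ^ p)
      + ((1 + monom 1 (p ^ j)) ^ p - 1 ^ p - (monom 1 (p ^ j)) ^ p) \<in> cyc_ideal p n"
    by (rule cyc_ideal_add)
  then have "(one_plus_x ^ (p ^ j)) ^ p - (1 + (monom 1 (p ^ j)) ^ p) \<in> cyc_ideal p n"
    by (simp add: algebra_simps)
  moreover have "(one_plus_x ^ (p ^ j)) ^ p = one_plus_x ^ (p ^ Suc j)"
    by (simp add: power_mult[symmetric] mult.commute)
  moreover have "(monom 1 (p ^ j)) ^ p = (monom 1 (p ^ Suc j) :: int poly)"
    by (simp add: monom_power mult.commute)
  ultimately show ?case by (simp only:)
qed

lemma pcompose_x_power:
  "pcompose (g :: int poly) (monom 1 p) = (\<Sum>i\<le>degree g. monom (coeff g i) (p * i))"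
proof -
  have "pcompose g (monom 1 p) = pcompose (\<Sum>i\<le>degree g. monom (coeff g i) i) (monom 1 p)"
    by (simp add: poly_as_sum_of_monoms)
  also have "\<dots> = (\<Sum>i\<le>degree g. monom (coeff g i) (p * i))"
    by (simp add: pcompose_sum pcompose_monom_left monom_power smult_monom mult.commute)
  finally show ?thesis .
qed

lemma pcompose_x_pow_minus_1: "pcompose (x_pow_minus_1 n) (monom 1 p) = x_pow_minus_1 (p * n)"
  by (simp add: x_pow_minus_1_def pcompose_diff pcompose_monom_left pcompose_1 monom_power)

lemma pcompose_x_power_in_cyc_ideal_iff:
  assumes n: "0 < n" and p: "0 < p"
  shows "pcompose g (monom 1 p) \<in> cyc_ideal m (p * n) \<longleftrightarrow> g \<in> cyc_ideal m n"
proof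
  assume "g \<in> cyc_ideal m n"
  then obtain q r where "g = x_pow_minus_1 n * q + smult (int m) r"
    unfolding cyc_ideal_def by blast
  then have "pcompose g (monom 1 p) =
      x_pow_minus_1 (p * n) * pcompose q (monom 1 p) + smult (int m) (pcompose r (monom 1 p))"
    by (simp add: pcompose_add pcompose_mult pcompose_smult pcompose_x_pow_minus_1)
  then show "pcompose g (monom 1 p) \<in> cyc_ideal m (p * n)" unfolding cyc_ideal_def by blast
next
  assume h: "pcompose g (monom 1 p) \<in> cyc_ideal m (p * n)"
  have "int m dvd folded_coeff n g r" if r: "r < n" for r
  proof -
    have "folded_coeff (p * n) (pcompose g (monom 1 p)) (p * r) =
          (\<Sum>i\<le>degree g. if (p * i) mod (p * n) = p * r then coeff g i else 0)"
      unfolding pcompose_x_power folded_coeff_sum folded_coeff_monom ..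
    also have "\<dots> = folded_coeff n g r"
      unfolding folded_coeff_def using p by (simp only: mult_mod_right[symmetric] mult_left_cancel)
    moreover have "int m dvd folded_coeff (p * n) (pcompose g (monom 1 p)) (p * r)"
      using h r n p by (simp add: cyc_ideal_iff_folded_coeff)
    ultimately show ?thesis by simp
  qed
  then show "g \<in> cyc_ideal m n" by (simp add: cyc_ideal_iff_folded_coeff[OF n])
qed

lemma one_plus_x_frobenius_cong:
  assumes p: "prime p"
  shows "one_plus_x ^ (p * K) * (one_plus_x ^ (p * P) - 1)
           - pcompose (one_plus_x ^ K * (one_plus_x ^ P - 1)) (monom 1 p) \<in> cyc_ideal p n"
proof -
  have u: "one_plus_x ^ p - pcompose one_plus_x (monom 1 p) \<in> cyc_ideal p n"
    using one_plus_x_power_prime_power_cong[OF p, of 1]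
    by (simp add: one_plus_x_altdef pcompose_add pcompose_1 pcompose_monom_left)
  show ?thesis
    unfolding power_mult pcompose_mult pcompose_diff pcompose_power_left pcompose_1
    by (intro cyc_ideal_mult_diff cyc_ideal_power_diff u) (simp add: cyc_ideal_power_diff[OF u])
qed

lemma is_period_mult_prime_iff:
  assumes p: "prime p" and n: "0 < n"
  shows "is_period p (p * n) (p * P) \<longleftrightarrow> is_period p n P"
proof -
  have p0: "0 < p" using p prime_gt_0_nat by blast
  have K_iff: "one_plus_x ^ K * (one_plus_x ^ P - 1) \<in> cyc_ideal p n \<longleftrightarrow>
        one_plus_x ^ (p * K) * (one_plus_x ^ (p * P) - 1) \<in> cyc_ideal p (p * n)" for K
    using cyc_ideal_diff_cong[OF one_plus_x_frobenius_cong[OF p]]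
      pcompose_x_power_in_cyc_ideal_iff[OF n p0] by blast
  show ?thesis
  proof
    assume "is_period p (p * n) (p * P)"
    from is_period_mult_power_form[OF this p0] obtain K
      where "(one_plus_x ^ p) ^ K * ((one_plus_x ^ p) ^ P - 1) \<in> cyc_ideal p (p * n)" .
    then show "is_period p n P" unfolding is_period_def K_iff by (auto simp: power_mult)
  next
    assume "is_period p n P"
    then show "is_period p (p * n) (p * P)" unfolding is_period_def K_iff by blast
  qed
qed

lemma min_period_mult_prime:
  assumes p: "prime p" and n: "0 < n" and dvd: "p dvd min_period p (p * n)"
  shows "min_period p (p * n) = p * min_period p n"
proof -
  have p0: "0 < p" using p prime_gt_0_nat by blast
  have pn: "0 < p * n" using p0 n by simp
  obtain L where L: "min_period p (p * n) = p * L" using dvd by blast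
  have "is_period p n L"
    using is_period_min_period[OF pn p0] L is_period_mult_prime_iff[OF p n] by simp
  then have "min_period p n dvd L" using is_period_iff_min_period_dvd[OF n p0] by blast
  moreover have "is_period p (p * n) (p * min_period p n)"
    using is_period_mult_prime_iff[OF p n] is_period_min_period[OF n p0] by blast
  then have "L dvd min_period p n" using is_period_iff_min_period_dvd[OF pn p0] L p0 by simp
  ultimately show ?thesis using L by (simp add: dvd_antisym)
qed

text \<open>Evaluate at x = 1, where x^p - 1 vanishes and has derivative p: the value gives
  p | 2^K (2^P - 1), and then the derivative gives p | P.\<close>

lemma prime_dvd_of_is_period_prime:
  assumes p: "prime p" "p \<noteq> 2" and P: "is_period p p P"
  shows "p dvd P"
proof -
  have pi: "prime (int p)" using p by simp
  obtain K where "one_plus_x ^ K * (one_plus_x ^ P - 1) \<in> cyc_ideal p p"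
    using P unfolding is_period_def by blast
  then obtain q r where F: "one_plus_x ^ K * (one_plus_x ^ P - 1) = x_pow_minus_1 p * q + smult (int p) r"
    unfolding cyc_ideal_def by blast
  define F where "F = one_plus_x ^ K * (one_plus_x ^ P - 1)"
  have x1: "poly (x_pow_minus_1 p) 1 = 0" "poly (pderiv (x_pow_minus_1 p)) 1 = int p"
    by (simp_all add: x_pow_minus_1_def pderiv_diff pderiv_monom poly_monom)
  have "int p dvd poly F 1" and "int p dvd poly (pderiv F) 1"
    unfolding F_def F using x1 by (simp_all add: pderiv_add pderiv_mult pderiv_smult)
  moreover have "poly F 1 = 2 ^ K * (2 ^ P - 1)"
    and "poly (pderiv F) 1 = 2 ^ K * (int P * 2 ^ (P - 1)) + (2 ^ P - 1) * (int K * 2 ^ (K - 1))"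
    by (simp_all add: F_def one_plus_x_def pderiv_mult pderiv_diff pderiv_power pderiv_pCons)
  ultimately have "int p dvd 2 ^ P - 1" and "int p dvd 2 ^ K * (int P * 2 ^ (P - 1))"
    using prime_dvd_mult_iff[OF pi] prime_not_dvd_power_two[OF p] dvd_add_left_iff by metis+
  then have "int p dvd int P"
    using prime_dvd_mult_iff[OF pi] prime_not_dvd_power_two[OF p] by metis
  then show ?thesis by simp
qed

definition mod2_poly :: "int poly \<Rightarrow> bit poly" where
  "mod2_poly f = map_poly of_int f"

lemma mod2_poly_0 [simp]: "mod2_poly 0 = 0"
  unfolding mod2_poly_def by simp

lemma mod2_poly_add: "mod2_poly (f + g) = mod2_poly f + mod2_poly g"
  unfolding mod2_poly_def by (rule poly_eqI) (simp add: coeff_map_poly)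

lemma mod2_poly_diff: "mod2_poly (f - g) = mod2_poly f - mod2_poly g"
  unfolding mod2_poly_def by (rule poly_eqI) (simp add: coeff_map_poly)

lemma mod2_poly_smult: "mod2_poly (smult a f) = smult (of_int a) (mod2_poly f)"
  unfolding mod2_poly_def by (rule poly_eqI) (simp add: coeff_map_poly)

lemma mod2_poly_pCons: "mod2_poly (pCons a f) = pCons (of_int a) (mod2_poly f)"
  unfolding mod2_poly_def by (simp add: map_poly_pCons)

lemma mod2_poly_mult: "mod2_poly (f * g) = mod2_poly f * mod2_poly g"
proof (induct f)
  case (pCons a f)
  have "mod2_poly (pCons a f * g) = smult (of_int a) (mod2_poly g) + pCons 0 (mod2_poly (f * g))"
    by (simp only: mult_pCons_left mod2_poly_add mod2_poly_smult mod2_poly_pCons of_int_0)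
  then show ?case by (simp only: pCons.hyps mod2_poly_pCons mult_pCons_left)
qed (simp add: mod2_poly_def)

lemma mod2_poly_1: "mod2_poly 1 = 1"
  unfolding mod2_poly_def by simp

lemma mod2_poly_power: "mod2_poly (f ^ k) = mod2_poly f ^ k"
  by (induct k) (simp_all add: mod2_poly_1 mod2_poly_mult)

lemma mod2_poly_monom: "mod2_poly (monom c k) = monom (of_int c) k"
  unfolding mod2_poly_def by (simp add: map_poly_monom)

lemma mod2_poly_cyc_ideal_2:
  assumes "f \<in> cyc_ideal 2 n"
  shows "monom 1 n - 1 dvd mod2_poly f"
proof -
  obtain q r where "f = x_pow_minus_1 n * q + smult (int 2) r"
    using assms unfolding cyc_ideal_def by blast
  then have "mod2_poly f = (monom 1 n - 1) * mod2_poly q"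
    by (simp add: mod2_poly_add mod2_poly_mult mod2_poly_smult mod2_poly_diff mod2_poly_1
        mod2_poly_monom x_pow_minus_1_def)
  then show ?thesis by simp
qed

lemma bit_of_nat_odd: "odd d \<Longrightarrow> (of_nat d :: bit) = 1"
  by (auto elim!: oddE)

lemma geometric_sum_square_dvd_bit:
  "(\<Sum>i<d. monom 1 i :: bit poly) ^ 2 dvd monom 1 (2 * d) - 1"
proof -
  define g :: "bit poly" where "g = (\<Sum>i<d. monom 1 i)"
  have neg1: "- (1 :: bit poly) = 1" by (simp add: one_pCons)
  have "monom (1::bit) (2 * d) - 1 = (monom 1 d - 1) * (monom 1 d + 1)"
    by (simp add: algebra_simps mult_monom mult_2 mult_2_right)
  also have "monom (1::bit) d + 1 = monom 1 d - 1"
    by (metis diff_minus_eq_add neg1)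
  also have "monom 1 d - 1 = (monom 1 1 - 1) * g"
    using power_diff_1_eq[of "monom (1::bit) 1" d] by (simp add: g_def monom_power)
  finally have "monom (1::bit) (2 * d) - 1 = g ^ 2 * (monom 1 1 - 1) ^ 2"
    by (simp add: power2_eq_square ac_simps)
  then show ?thesis unfolding g_def by simp
qed

text \<open>Modulo 2, x^(2d) - 1 = (x - 1)^2 g^2 with g = 1 + x + ... + x^(d-1) prime to 1 + x,
  so g^2 divides (1 + x)^P - 1. Then g divides the derivative P (1 + x)^(P-1), which for odd P
  forces g to be a unit.\<close>

lemma even_of_is_period_2_double_odd:
  assumes d: "odd d" "1 < d" and P: "is_period 2 (2 * d) P"
  shows "even P"
proof (rule ccontr)
  assume oP: "odd P"
  define v :: "bit poly" where "v = [:1, 1:]"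
  define g :: "bit poly" where "g = (\<Sum>i<d. monom 1 i)"
  obtain K where "one_plus_x ^ K * (one_plus_x ^ P - 1) \<in> cyc_ideal 2 (2 * d)"
    using P unfolding is_period_def by blast
  from mod2_poly_cyc_ideal_2[OF this] have "monom 1 (2 * d) - 1 dvd v ^ K * (v ^ P - 1)"
    by (simp add: one_plus_x_def v_def mod2_poly_pCons mod2_poly_mult mod2_poly_power
        mod2_poly_diff mod2_poly_1)
  moreover have "g * g dvd monom 1 (2 * d) - 1"
    using geometric_sum_square_dvd_bit[of d] by (simp add: g_def power2_eq_square)
  ultimately have gg_dvd: "g * g dvd v ^ K * (v ^ P - 1)" by (rule dvd_trans[rotated])
  have g1: "poly g 1 = 1"
    using bit_of_nat_odd[OF d(1)] by (simp add: g_def poly_sum poly_monom)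
  then have "poly (g - 1) 1 = 0" by simp
  then have "[:- 1, 1:] dvd g - 1" using poly_eq_0_iff_dvd by blast
  moreover have "[:- 1, 1:] = v" by (simp add: v_def)
  ultimately obtain s where s: "g - 1 = v * s" by (auto elim: dvdE)
  have "v * (- s * (1 + g)) = 1 - g * g" using s by (simp add: algebra_simps)
  from dvd_power_mult_cancel_unit_mod[OF this gg_dvd] obtain w where w: "v ^ P - 1 = g * g * w"
    by (auto elim: dvdE)
  have "pderiv (v ^ P - 1) = g * (g * pderiv w + 2 * w * pderiv g)"
    unfolding w by (simp add: pderiv_mult algebra_simps mult_2)
  then have "g dvd pderiv (v ^ P - 1)" by simp
  moreover have "pderiv (v ^ P - 1) = v ^ (P - 1) * 1"
    using bit_of_nat_odd[OF oP] by (simp add: pderiv_diff pderiv_power v_def pderiv_pCons)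
  ultimately have "g dvd v ^ (P - 1) * 1" by simp
  moreover have "v * (- s) = 1 - g" using s by (simp add: algebra_simps)
  ultimately have "is_unit g" using dvd_power_mult_cancel_unit_mod by blast
  moreover have "1 \<le> degree g"
    by (rule le_degree) (use d(2) in \<open>simp add: g_def coeff_sum coeff_monom\<close>)
  moreover have "g \<noteq> 0" using g1 by auto
  ultimately show False using is_unit_iff_degree[of g] by simp
qed

lemma min_period_prime_power_mult:
  assumes p: "prime p" and n': "0 < n'" "\<not> p dvd n'" and not_2_1: "p \<noteq> 2 \<or> n' \<noteq> 1"
  shows "min_period p (p ^ k * n') = p ^ k * min_period p n'"
proof (induct k)
  case (Suc k)
  have p0: "0 < p" using p prime_gt_0_nat by blast
  define N where "N = p ^ k * n'"
  have N: "0 < N" using p0 n' by (simp add: N_def)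
  have "p dvd min_period p (p * N)"
  proof (cases "p = 2")
    case False
    have "p dvd min_period p p"
      using prime_dvd_of_is_period_prime[OF p False is_period_min_period] p0 by blast
    also have "min_period p p dvd min_period p (p * N)"
      by (rule min_period_dvd_min_period) (use p0 N in auto)
    finally show ?thesis .
  next
    case True
    then have "odd n'" "1 < n'" using n' not_2_1 by auto
    then have "even (min_period 2 (2 * n'))"
      using even_of_is_period_2_double_odd is_period_min_period n'(1) by simp
    moreover have "min_period 2 (2 * n') dvd min_period 2 (2 * N)"
      by (rule min_period_dvd_min_period) (use n' N in \<open>auto simp: N_def\<close>)
    ultimately show ?thesis using True by (metis dvd_trans)
  qed
  then have "min_period p (p * N) = p * min_period p N" by (rule min_period_mult_prime[OF p N])
  then show ?case using Suc by (simp add: N_def mult.assoc)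
qed simp

text \<open>Modulo (p, x^n - 1) Frobenius gives (1 + x)^(p^j) = 1 + x^(p^j) = 1 + x.\<close>

lemma is_period_prime_power_pred:
  assumes p: "prime p" and dvd: "n dvd p ^ j - 1"
  shows "is_period p n (p ^ j - 1)"
proof -
  have s1: "Suc (p ^ j - 1) = p ^ j" using p prime_gt_0_nat by simp
  from x_pow_minus_1_dvd[OF dvd] obtain c where "x_pow_minus_1 (p ^ j - 1) = x_pow_minus_1 n * c"
    by (rule dvdE)
  then have "monom 1 1 * x_pow_minus_1 (p ^ j - 1) \<in> cyc_ideal p n"
    using x_pow_minus_1_mult_in_cyc_ideal[of n "monom 1 1 * c"] by (simp add: ac_simps)
  moreover have "monom 1 1 * x_pow_minus_1 (p ^ j - 1) = monom 1 (p ^ j) - monom 1 1"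
    using s1 by (simp add: x_pow_minus_1_def right_diff_distrib mult_monom)
  ultimately have "monom 1 (p ^ j) - monom 1 1 \<in> cyc_ideal p n" by simp
  with one_plus_x_power_prime_power_cong[OF p]
  have "(one_plus_x ^ (p ^ j) - (1 + monom 1 (p ^ j))) + (monom 1 (p ^ j) - monom 1 1)
      \<in> cyc_ideal p n"
    by (rule cyc_ideal_add)
  also have "(one_plus_x ^ (p ^ j) - (1 + monom 1 (p ^ j))) + (monom 1 (p ^ j) - monom 1 1) =
      one_plus_x ^ Suc (p ^ j - 1) - one_plus_x"
    unfolding s1 one_plus_x_altdef by simp
  also have "\<dots> = one_plus_x ^ 1 * (one_plus_x ^ (p ^ j - 1) - 1)"
    by (simp add: right_diff_distrib)
  finally show ?thesis unfolding is_period_def by blast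
qed

lemma prime_not_dvd_min_period:
  assumes p: "prime p" and n': "0 < n'" "\<not> p dvd n'"
  shows "\<not> p dvd min_period p n'"
proof
  assume pd: "p dvd min_period p n'"
  have p0: "0 < p" using p prime_gt_0_nat by blast
  define j where "j = totient n'"
  have "coprime p n'" using p n' by (simp add: prime_imp_coprime)
  then have "[p ^ j = 1] (mod n')" unfolding j_def by (rule euler_theorem)
  moreover have pj: "1 \<le> p ^ j" using p0 by simp
  ultimately have "n' dvd p ^ j - 1" using cong_altdef_nat by blast
  then have "min_period p n' dvd p ^ j - 1"
    using is_period_prime_power_pred[OF p] is_period_iff_min_period_dvd[OF n'(1) p0] by blast
  then have "p dvd p ^ j - 1" using pd dvd_trans by blast
  moreover have "p dvd p ^ j" using n' by (simp add: j_def)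
  ultimately have "p dvd p ^ j - (p ^ j - 1)" by (rule dvd_diff_nat[rotated])
  then have "p dvd 1" using pj by simp
  then show False using p by simp
qed

section \<open>Prime-power moduli\<close>

lemma cyc_ideal_lift_prime_power:
  assumes c: "c * (w - 1) \<in> cyc_ideal p n"
    and c': "c' * (w ^ (p ^ j) - 1) \<in> cyc_ideal (p ^ (j + 1)) n"
  shows "c' * c * (w ^ (p ^ (j + 1)) - 1) \<in> cyc_ideal (p ^ (j + 2)) n"
proof -
  define S where "S = (\<Sum>i<p. (w ^ (p ^ j)) ^ i)"
  have "c * (w ^ k - 1) \<in> cyc_ideal p n" for k
    using cyc_ideal_mult_right[OF c, of "\<Sum>i<k. w ^ i"] power_diff_1_eq[of w k]
    by (simp add: mult.assoc)
  then have "(\<Sum>i<p. c * ((w ^ (p ^ j)) ^ i - 1)) \<in> cyc_ideal p n"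
    by (intro cyc_ideal_sum) (simp add: power_mult[symmetric])
  also have "(\<Sum>i<p. c * ((w ^ (p ^ j)) ^ i - 1)) = c * S - of_nat p * c"
    by (simp add: S_def sum_distrib_left right_diff_distrib sum_subtractf)
  finally have "c * S - of_nat p * c + of_nat p * c \<in> cyc_ideal p n"
    by (rule cyc_ideal_add) (rule of_nat_dvd_in_cyc_ideal, simp)
  then have "c * S \<in> cyc_ideal p n" by simp
  from cyc_ideal_mult[OF c' this]
  have "c' * (w ^ (p ^ j) - 1) * (c * S) \<in> cyc_ideal (p ^ (j + 2)) n" by (simp add: ac_simps)
  moreover have "w ^ (p ^ (j + 1)) - 1 = (w ^ (p ^ j) - 1) * S"
    using power_diff_1_eq[of "w ^ (p ^ j)" p] by (simp add: S_def power_mult[symmetric] mult.commute)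
  ultimately show ?thesis by (simp add: ac_simps)
qed

lemma is_period_prime_power_modulus:
  assumes "is_period p n L"
  shows "is_period (p ^ (j + 1)) n (p ^ j * L)"
proof -
  obtain K where K: "one_plus_x ^ K * (one_plus_x ^ L - 1) \<in> cyc_ideal p n"
    using assms unfolding is_period_def by blast
  have "\<exists>K'. one_plus_x ^ K' * ((one_plus_x ^ L) ^ (p ^ j) - 1) \<in> cyc_ideal (p ^ (j + 1)) n"
  proof (induct j)
    case 0
    then show ?case using K by auto
  next
    case (Suc j)
    then obtain K' where "one_plus_x ^ K' * ((one_plus_x ^ L) ^ (p ^ j) - 1) \<in> cyc_ideal (p ^ (j + 1)) n"
      by blast
    from cyc_ideal_lift_prime_power[OF K this]
    have "one_plus_x ^ (K' + K) * ((one_plus_x ^ L) ^ (p ^ Suc j) - 1) \<in> cyc_ideal (p ^ (Suc j + 1)) n"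
      by (simp add: power_add)
    then show ?case by blast
  qed
  then show ?thesis unfolding is_period_def by (simp add: power_mult[symmetric] mult.commute)
qed

lemma cyc_ideal_cancel_cong_1:
  assumes CY: "C * Y \<in> cyc_ideal (p ^ e) n" and C: "C - 1 \<in> cyc_ideal p n"
  shows "Y \<in> cyc_ideal (p ^ e) n"
proof -
  have "Y \<in> cyc_ideal (p ^ i) n" if "i \<le> e" for i
    using that
  proof (induct i)
    case (Suc i)
    have "C * Y \<in> cyc_ideal (p ^ Suc i) n"
      using CY cyc_ideal_mono[OF le_imp_power_dvd[OF Suc.prems] dvd_refl] by blast
    moreover have "(C - 1) * Y \<in> cyc_ideal (p ^ Suc i) n"
      using cyc_ideal_mult[OF C Suc.hyps] Suc.prems by simp
    ultimately have "C * Y - (C - 1) * Y \<in> cyc_ideal (p ^ Suc i) n" by (rule cyc_ideal_diff)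
    then show ?case by (simp add: algebra_simps)
  qed (simp only: power_0 cyc_ideal_1 UNIV_I)
  then show ?thesis by simp
qed

lemma is_period_1_iff:
  assumes p: "prime p" "p \<noteq> 2"
  shows "is_period p 1 P \<longleftrightarrow> int p dvd 2 ^ P - 1"
proof -
  have "prime (int p)" using p by simp
  then have "int p dvd 2 ^ K * (2 ^ P - 1) \<longleftrightarrow> int p dvd 2 ^ P - 1" for K
    using prime_dvd_mult_iff prime_not_dvd_power_two[OF p] by blast
  then show ?thesis
    unfolding is_period_def cyc_ideal_1_iff by (simp add: one_plus_x_def)
qed

text \<open>This is where the Wieferich hypothesis enters: min_period p 1 is the order of 2 modulo p,
  a divisor of p - 1, so p^2 cannot divide 2^(min_period p 1) - 1.\<close>

lemma two_power_min_period_1: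
  assumes p: "prime p" "p \<noteq> 2" and nw: "\<not> wieferich p"
  obtains \<alpha> where "(2::int) ^ min_period p 1 = 1 + int p * \<alpha>" and "\<not> int p dvd \<alpha>"
proof -
  have p0: "0 < p" using p prime_gt_0_nat by blast
  define t where "t = min_period p 1"
  have "int p dvd 2 ^ t - 1"
    using is_period_min_period[of 1 p] p0 is_period_1_iff[OF p] by (simp add: t_def)
  then obtain \<alpha> where \<alpha>: "2 ^ t - 1 = int p * \<alpha>" by (auto elim: dvdE)
  have "\<not> p dvd 2" using p prime_ge_2_nat[of p] dvd_imp_le[of p 2] by auto
  then have "[2 ^ (p - 1) = 1] (mod p)" by (rule fermat_theorem[OF p(1)])
  then have "int p dvd 2 ^ (p - 1) - 1"
    by (metis cong_iff_dvd_diff cong_int_iff of_nat_1 of_nat_numeral of_nat_power)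
  then have "t dvd p - 1"
    using is_period_1_iff[OF p] is_period_iff_min_period_dvd[of 1 p] p0 by (simp add: t_def)
  then obtain m where m: "p - 1 = t * m" by (auto elim: dvdE)
  have "\<not> int p dvd \<alpha>"
  proof
    assume "int p dvd \<alpha>"
    then have "int p * int p dvd 2 ^ t - 1" unfolding \<alpha> by simp
    moreover have "(2::int) ^ t - 1 dvd 2 ^ (p - 1) - 1"
      unfolding m power_mult using power_diff_1_eq[of "(2::int) ^ t" m] by simp
    ultimately have "int (p ^ 2) dvd int (2 ^ (p - 1)) - int 1"
      by (simp add: power2_eq_square dvd_trans)
    then have "[2 ^ (p - 1) = 1] (mod p ^ 2)"
      by (metis cong_iff_dvd_diff cong_int_iff)
    then show False using nw p unfolding wieferich_def by simp
  qed
  moreover have "2 ^ t = 1 + int p * \<alpha>" using \<alpha> by linarith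
  ultimately show ?thesis using that unfolding t_def by blast
qed

lemma folded_coeff_one_plus_x_power_self:
  assumes N: "0 < N"
  shows "folded_coeff N (one_plus_x ^ N) 0 = 2"
proof -
  have "degree (one_plus_x ^ N) \<le> N"
    using degree_power_le[of one_plus_x N] by (simp add: one_plus_x_def)
  then have "folded_coeff N (one_plus_x ^ N) 0 =
      (\<Sum>l\<le>N. if l mod N = 0 then coeff (one_plus_x ^ N) l else 0)"
    by (rule folded_coeff_bound)
  also have "\<dots> = (\<Sum>l\<in>{0, N}. if l mod N = 0 then coeff (one_plus_x ^ N) l else 0)"
    by (rule sum.mono_neutral_right) auto
  also have "\<dots> = coeff (one_plus_x ^ N) 0 + coeff (one_plus_x ^ N) N" using N by simp
  also have "\<dots> = 2"
    using coeff_linear_poly_power[of 0 N "1::int" 1] coeff_linear_poly_power[of N N "1::int" 1]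
    by (simp add: one_plus_x_def)
  finally show ?thesis .
qed

lemma one_plus_x_power_prime_power_eq:
  assumes p: "prime p"
  obtains B where "one_plus_x ^ (p ^ k) - (2 + smult (int p) B) = x_pow_minus_1 (p ^ k)"
    and "folded_coeff (p ^ k) B 0 = 0"
proof -
  have p0: "0 < p" using p prime_gt_0_nat by blast
  obtain q B where "one_plus_x ^ (p ^ k) - (1 + monom 1 (p ^ k)) = x_pow_minus_1 0 * q + smult (int p) B"
    using one_plus_x_power_prime_power_cong[OF p, of k 0] unfolding cyc_ideal_def by blast
  then have B: "one_plus_x ^ (p ^ k) - (1 + monom 1 (p ^ k)) = smult (int p) B"
    by (simp add: x_pow_minus_1_def)
  have "int p * folded_coeff (p ^ k) B 0 = folded_coeff (p ^ k) (one_plus_x ^ (p ^ k) - (1 + monom 1 (p ^ k))) 0"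
    unfolding B by (simp add: folded_coeff_smult)
  also have "\<dots> = 0"
    using folded_coeff_one_plus_x_power_self[of "p ^ k"] folded_coeff_monom[of "p ^ k" 1 0 0] p0
    by (simp add: folded_coeff_diff folded_coeff_add folded_coeff_monom flip: monom_eq_1)
  finally have "folded_coeff (p ^ k) B 0 = 0" using p0 by simp
  moreover have "one_plus_x ^ (p ^ k) - (2 + smult (int p) B) = x_pow_minus_1 (p ^ k)"
    using B by (simp add: x_pow_minus_1_def algebra_simps)
  ultimately show ?thesis using that by blast
qed

lemma one_plus_x_power_min_period_1_cong:
  assumes p: "prime p" "p \<noteq> 2" and nw: "\<not> wieferich p"
  obtains w where "one_plus_x ^ (p ^ k * min_period p 1) - (1 + smult (int p) w) \<in> cyc_ideal 0 (p ^ k)"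
    and "\<not> int p dvd folded_coeff (p ^ k) w 0"
proof -
  define N t where "N = p ^ k" and "t = min_period p 1"
  obtain \<alpha> where \<alpha>: "(2::int) ^ t = 1 + int p * \<alpha>" and n\<alpha>: "\<not> int p dvd \<alpha>"
    using two_power_min_period_1[OF p nw] unfolding t_def by blast
  obtain B where B: "one_plus_x ^ N - (2 + smult (int p) B) = x_pow_minus_1 N"
    and fB: "folded_coeff N B 0 = 0"
    using one_plus_x_power_prime_power_eq[OF p(1)] unfolding N_def by blast
  obtain R where R: "(2 + smult (int p) B) ^ t
      = 2 ^ t + of_nat t * 2 ^ (t - 1) * smult (int p) B + (smult (int p) B) ^ 2 * R"
    using power_add_second_order by blast
  define w where "w = [:\<alpha>:] + smult (int t * 2 ^ (t - 1)) B + smult (int p) (B ^ 2 * R)"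
  have "(2::int poly) ^ t = 1 + smult (int p) [:\<alpha>:]"
    by (simp add: numeral_poly poly_const_pow \<alpha> one_pCons)
  moreover have "of_nat t * 2 ^ (t - 1) * smult (int p) B = smult (int p) (smult (int t * 2 ^ (t - 1)) B)"
    by (simp add: of_nat_poly numeral_poly poly_const_pow ac_simps)
  moreover have "(smult (int p) B) ^ 2 * R = smult (int p) (smult (int p) (B ^ 2 * R))"
    by (simp add: power2_eq_square ac_simps)
  ultimately have "(2 + smult (int p) B) ^ t = 1 + smult (int p) w"
    unfolding R w_def by (simp add: smult_add_right)
  moreover have "one_plus_x ^ (N * t) - (2 + smult (int p) B) ^ t \<in> cyc_ideal 0 N"
    using cyc_ideal_power_diff[of "one_plus_x ^ N" "2 + smult (int p) B" 0 N t]
      x_pow_minus_1_mult_in_cyc_ideal[of N 1] B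
    by (simp add: power_mult)
  moreover have "folded_coeff N w 0 = \<alpha> + int p * folded_coeff N (B ^ 2 * R) 0"
    using folded_coeff_monom[of N \<alpha> 0 0]
    by (simp add: w_def folded_coeff_add folded_coeff_smult fB monom_0)
  then have "\<not> int p dvd folded_coeff N w 0" using n\<alpha> by (simp add: dvd_add_left_iff)
  ultimately show ?thesis using that unfolding N_def t_def by simp
qed

lemma prime_power_dvd_of_power_cong_1:
  assumes p: "prime p" "p \<noteq> 2" and N: "0 < N"
    and w: "\<not> int p dvd folded_coeff N w 0"
    and s: "(1 + smult (int p) w) ^ s - 1 \<in> cyc_ideal (p ^ e) N"
  shows "p ^ (e - 1) dvd s"
proof (rule ccontr)
  assume nd: "\<not> p ^ (e - 1) dvd s"
  have p0: "0 < p" using p prime_gt_0_nat by blast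
  define a where "a = multiplicity p s"
  have "s \<noteq> 0" using nd by (metis dvd_0_right)
  moreover have "\<not> is_unit p" using p by auto
  ultimately obtain s' where s': "s = p ^ a * s'" "\<not> p dvd s'"
    using multiplicity_decompose'[of s p] unfolding a_def by blast
  have "\<not> e - 1 \<le> a"
    using nd s'(1) le_imp_power_dvd[of "e - 1" a p] by (auto intro: dvd_mult2)
  then have a: "p ^ (a + 2) dvd p ^ e" by (intro le_imp_power_dvd) simp
  obtain z where z: "(1 + of_nat p * w) ^ (p ^ a * s')
      = 1 + of_nat p ^ (a + 1) * (of_nat s' * w + of_nat p * z)"
    using power_one_plus_prime_mult[OF p] by blast
  define V where "V = of_nat s' * w + of_nat p * z"
  have "(1 + smult (int p) w) ^ s - 1 = smult (int (p ^ (a + 1))) V"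
    unfolding s'(1) smult_of_nat_eq_mult z V_def by simp
  then have "smult (int (p ^ (a + 1))) V \<in> cyc_ideal (p ^ e) N" using s by simp
  then have "smult (int (p ^ (a + 1))) V \<in> cyc_ideal (p ^ (a + 2)) N"
    using cyc_ideal_mono[OF a dvd_refl] by blast
  then have "int (p ^ (a + 1)) * int p dvd int (p ^ (a + 1)) * folded_coeff N V 0"
    using cyc_ideal_iff_folded_coeff[OF N] N by (simp add: folded_coeff_smult)
  then have "int p dvd folded_coeff N V 0" using p0 by simp
  moreover have "folded_coeff N V 0 = int s' * folded_coeff N w 0 + int p * folded_coeff N z 0"
    by (simp add: V_def of_nat_poly folded_coeff_add folded_coeff_smult)
  ultimately have "int p dvd int s' * folded_coeff N w 0" by (simp add: dvd_add_left_iff)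
  moreover have "prime (int p)" using p by simp
  ultimately have "int p dvd int s' \<or> int p dvd folded_coeff N w 0"
    using prime_dvd_mult_iff by blast
  then show False using s'(2) w by simp
qed

text \<open>Modulo x^(p^k) - 1 the power (1 + x)^(p^k t), t = min_period p 1, is 1 + p w, where p does
  not divide the folded constant coefficient of w. A period p^k t s at the modulus p^e therefore
  satisfies (1 + p w)^s = 1 modulo (p^e, x^(p^k) - 1), and lifting the exponent gives p^(e-1) | s.\<close>

lemma prime_power_dvd_min_period_prime_power:
  assumes p: "prime p" "p \<noteq> 2" and nw: "\<not> wieferich p" and e: "1 \<le> e"
  shows "p ^ (e - 1 + k) dvd min_period (p ^ e) (p ^ k)"
proof -
  have p0: "0 < p" using p prime_gt_0_nat by blast
  define N t L where "N = p ^ k" and "t = min_period p 1" and "L = min_period (p ^ e) N"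
  have N0: "0 < N" and pe0: "0 < p ^ e" and t0: "0 < t"
    using p0 min_period_pos[of 1 p] by (simp_all add: N_def t_def)
  have "min_period p N dvd L"
    unfolding L_def by (rule min_period_dvd_min_period) (use p0 N0 e in \<open>auto simp: dvd_power\<close>)
  moreover have "min_period p N = N * t"
    using min_period_prime_power_mult[OF p(1), of 1 k] p(2) prime_gt_1_nat[OF p(1)]
    unfolding N_def t_def by simp
  ultimately obtain s where Ls: "L = N * t * s" by (auto elim: dvdE)
  obtain w where cw: "one_plus_x ^ (N * t) - (1 + smult (int p) w) \<in> cyc_ideal 0 N"
    and w: "\<not> int p dvd folded_coeff N w 0"
    using one_plus_x_power_min_period_1_cong[OF p nw] unfolding N_def t_def by blast
  define c where "c = one_plus_x ^ (N * t)"
  have cw': "c ^ j - (1 + smult (int p) w) ^ j \<in> cyc_ideal m N" for m j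
    using cyc_ideal_power_diff[OF cw] cyc_ideal_mono[of m 0 N N] unfolding c_def by auto
  have c1: "c - 1 \<in> cyc_ideal p N"
    using cyc_ideal_add[OF cw'[of 1 p] smult_in_cyc_ideal[of p w N]] by simp
  have "is_period (p ^ e) N (N * t * s)"
    using is_period_min_period[OF N0 pe0] Ls unfolding L_def by simp
  moreover have "0 < N * t" using N0 t0 by simp
  ultimately obtain K where K: "c ^ K * (c ^ s - 1) \<in> cyc_ideal (p ^ e) N"
    unfolding c_def by (rule is_period_mult_power_form)
  have "c ^ K - 1 \<in> cyc_ideal p N"
    using cyc_ideal_power_diff[OF c1, of K] by simp
  from cyc_ideal_diff[OF cyc_ideal_cancel_cong_1[OF K this] cw'[of s "p ^ e"]]
  have "(1 + smult (int p) w) ^ s - 1 \<in> cyc_ideal (p ^ e) N" by simp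
  then have "p ^ (e - 1) dvd s" by (rule prime_power_dvd_of_power_cong_1[OF p N0 w])
  then obtain s2 where "s = p ^ (e - 1) * s2" by (auto elim: dvdE)
  with Ls have "min_period (p ^ e) (p ^ k) = p ^ (e - 1 + k) * (t * s2)"
    unfolding L_def N_def by (simp add: power_add ac_simps)
  then show ?thesis by simp
qed

lemma min_period_prime_power_modulus:
  assumes p: "prime p" "p \<noteq> 2" and nw: "\<not> wieferich p" and e: "1 \<le> e"
    and n': "0 < n'" "\<not> p dvd n'"
  shows "min_period (p ^ e) (p ^ k * n') = p ^ (e - 1) * min_period p (p ^ k * n')"
proof -
  have p1: "1 < p" using prime_gt_1_nat[OF p(1)] .
  then have p0: "0 < p" by simp
  define n where "n = p ^ k * n'"
  have n0: "0 < n" and pe0: "0 < p ^ e" using p0 n' by (simp_all add: n_def)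
  have "min_period p n dvd min_period (p ^ e) n"
    by (rule min_period_dvd_min_period) (use p0 n0 e in \<open>auto simp: dvd_power\<close>)
  then obtain d where d: "min_period (p ^ e) n = min_period p n * d" by (auto elim: dvdE)
  have "is_period (p ^ (e - 1 + 1)) n (p ^ (e - 1) * min_period p n)"
    by (rule is_period_prime_power_modulus[OF is_period_min_period[OF n0 p0]])
  then have "min_period p n * d dvd p ^ (e - 1) * min_period p n"
    using is_period_iff_min_period_dvd[OF n0 pe0] d e by simp
  then have "d dvd p ^ (e - 1)" using min_period_pos[OF n0 p0] by (simp add: mult.commute)
  then obtain b where b: "b \<le> e - 1" "d = p ^ b" using divides_primepow_nat[OF p(1)] by blast
  have "p ^ (e - 1 + k) dvd min_period (p ^ e) (p ^ k)"
    by (rule prime_power_dvd_min_period_prime_power[OF p nw e])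
  also have "min_period (p ^ e) (p ^ k) dvd min_period (p ^ e) n"
    by (rule min_period_dvd_min_period) (use p0 n0 in \<open>auto simp: n_def\<close>)
  finally have "p ^ k * p ^ (e - 1) dvd p ^ k * (min_period p n' * p ^ b)"
    using d b min_period_prime_power_mult[OF p(1) n'] p(2) by (simp add: n_def power_add ac_simps)
  then have "p ^ (e - 1) dvd min_period p n' * p ^ b" using p0 by simp
  moreover have "coprime (p ^ (e - 1)) (min_period p n')"
    using prime_not_dvd_min_period[OF p(1) n'] p(1) by (simp add: prime_imp_coprime)
  ultimately have "p ^ (e - 1) dvd p ^ b" using coprime_dvd_mult_right_iff by blast
  then have "e - 1 \<le> b" using power_dvd_imp_le p1 by blast
  with b have "d = p ^ (e - 1)" by simp
  then show ?thesis using d by (simp add: n_def mult.commute)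
qed

lemma Pmax_prime_power_mult:
  assumes p: "prime p" and n': "0 < n'" "\<not> p dvd n'" and not_2_1: "p = 2 \<longrightarrow> n' \<noteq> 1"
  shows "Pmax p (p ^ k * n') = p ^ k * Pmax p n'"
proof -
  have p0: "0 < p" using p prime_gt_0_nat by blast
  have "Pmax p (p ^ k * n') = min_period p (p ^ k * n')"
    using p0 n' by (intro Pmax_eq_min_period) simp_all
  also have "\<dots> = p ^ k * min_period p n'"
    using min_period_prime_power_mult[OF p n'] not_2_1 by blast
  also have "min_period p n' = Pmax p n'"
    using p0 n' by (intro Pmax_eq_min_period[symmetric]) simp_all
  finally show ?thesis .
qed

lemma Pmax_prime_power_modulus_prime_power_mult:
  assumes p: "prime p" "p \<noteq> 2" and nw: "\<not> wieferich p" and e: "1 \<le> e"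
    and n': "0 < n'" "\<not> p dvd n'"
  shows "Pmax (p ^ e) (p ^ k * n') = p ^ k * Pmax (p ^ e) n'"
proof -
  have p0: "0 < p" using p prime_gt_0_nat by blast
  have "Pmax (p ^ e) (p ^ k * n') = min_period (p ^ e) (p ^ k * n')"
    using p0 n' by (intro Pmax_eq_min_period) simp_all
  also have "\<dots> = p ^ k * (p ^ (e - 1) * min_period p n')"
    using min_period_prime_power_modulus[OF p nw e n'] min_period_prime_power_mult[OF p(1) n'] p(2)
    by simp
  also have "p ^ (e - 1) * min_period p n' = Pmax (p ^ e) n'"
    using min_period_prime_power_modulus[OF p nw e n', of 0] p0 n' Pmax_eq_min_period by simp
  finally show ?thesis .
qed

theorem proposition5p9:
  fixes p n k n' :: nat
  assumes "prime p" and "0 < n"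
    and "k = multiplicity p n" and "n = p ^ k * n'"
  shows "((p = 2 \<longrightarrow> n' \<noteq> 1) \<longrightarrow> Pmax p n = p ^ k * Pmax p n')
    \<and> (2 < p \<and> \<not> wieferich p \<longrightarrow> Pmax (p ^ 2) n = p ^ k * Pmax (p ^ 2) n')
    \<and> (2 < p \<and> \<not> wieferich p \<longrightarrow> Pmax (p ^ 3) n = p ^ k * Pmax (p ^ 3) n')"
proof -
  have p1: "1 < p" using prime_gt_1_nat[OF assms(1)] .
  have n'0: "0 < n'" using assms(2,4) by (cases "n' = 0") auto
  have "n div p ^ k = n'" using assms(4) p1 by simp
  then have n': "\<not> p dvd n'"
    using multiplicity_decompose[of n p] assms(2) p1 unfolding assms(3)[symmetric] by simp
  show ?thesis
    unfolding assms(4)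
    using Pmax_prime_power_mult[OF assms(1) n'0 n']
      Pmax_prime_power_modulus_prime_power_mult[OF assms(1) _ _ _ n'0 n']
    by simp
qed

end
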